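(* Let $\Omega$ be a domain in $\mathbb{C}$ and let $L$ and $L'$ be two disjoint connected $\Omega$-convex compact sets. Then $L\cup L'$ is $\Omega$-convex if and only if one of the following holds: (1) $L\subset\mathbb{C}\setminus\widehat{L'}$ and $L'\subset\mathbb{C}\setminus\widehat{L}$; (2) there exists a hole $O$ of $L$ such that $L'\subset O$ and $O\setminus\widehat{L'}$ contains a hole of $\Omega$; (3) there exists a hole $O'$ of $L'$ such that $L\subset O'$ and $O'\setminus\widehat{L}$ contains a hole of $\Omega$.
   Context: A hole of a set $E\subset\mathbb{C}$ is a non-empty bounded connected component of $\mathbb{C}\setminus E$. For a compact set $K$, $\widehat{K}$ (its polynomial hull) is the union of $K$ and all its holes. For an open set $\Omega$, a compact set $K\subset\Omega$ is $\Omega$-convex if every hole of $K$ contains a point of $\mathbb{C}\setminus\Omega$. *)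

theory Defs
  imports "HOL-Analysis.Analysis"
begin

text \<open>A hole of E: a non-empty bounded connected component of the complement of E.
  (Elements of components are automatically non-empty.)\<close>
definition hole :: "complex set \<Rightarrow> complex set \<Rightarrow> bool" where
  "hole E U \<longleftrightarrow> U \<in> components (- E) \<and> bounded U"

text \<open>Polynomial hull: K together with all its holes.\<close>
definition phull :: "complex set \<Rightarrow> complex set" where
  "phull K = K \<union> \<Union>{U. hole K U}"

definition omega_convex :: "complex set \<Rightarrow> complex set \<Rightarrow> bool" where
  "omega_convex \<Omega> K \<longleftrightarrow> compact K \<and> K \<subseteq> \<Omega> \<and>
     (\<forall>U. hole K U \<longrightarrow> U \<inter> (- \<Omega>) \<noteq> {})"

end

theory Submission
  imports Defs
begin

text \<open>
  A hole of \<open>L \<union> L'\<close> contained in a hole of \<open>L\<close> and disjoint from \<open>L'\<close> is already a hole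
  of \<open>L\<close>, so it meets \<open>-\<Omega>\<close>; symmetrically for \<open>L'\<close>. By Janiszewski's theorem, points lying
  in the unbounded components of both complements are connected in the complement of the union.
  If neither set lies in a hole of the other, the remaining holes are therefore unbounded, which
  gives (1). If \<open>L'\<close> lies in a hole \<open>O\<close> of \<open>L\<close>, then \<open>L\<close> lies in the unbounded component of
  \<open>-L'\<close>, and \<open>O\<close> minus the hull of \<open>L'\<close> lies in a single new hole of \<open>L \<union> L'\<close>; this hole
  meets \<open>-\<Omega>\<close> exactly when \<open>O\<close> minus the hull of \<open>L'\<close> contains a hole of \<open>\<Omega>\<close>, which gives (2).
\<close>

lemma hole_iff_inside: "hole K U \<longleftrightarrow> (\<exists>x \<in> inside K. U = connected_component_set (- K) x)"
  unfolding hole_def components_iff inside_def by auto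

lemma hole_subset_inside: "hole K U \<Longrightarrow> U \<subseteq> inside K"
  by (auto simp: hole_iff_inside intro: inside_same_component)

lemma Union_holes_eq_inside: "\<Union>{U. hole K U} = inside K"
proof
  show "\<Union>{U. hole K U} \<subseteq> inside K"
    using hole_subset_inside by blast
  show "inside K \<subseteq> \<Union>{U. hole K U}"
  proof
    fix x assume x: "x \<in> inside K"
    then have "hole K (connected_component_set (- K) x)"
      by (auto simp: hole_iff_inside)
    moreover have "x \<in> connected_component_set (- K) x"
      using x by (simp add: inside_def)
    ultimately show "x \<in> \<Union>{U. hole K U}" by blast
  qed
qed

lemma Compl_phull: "- phull K = outside K"
  by (simp add: phull_def Union_holes_eq_inside outside_inside)

lemma omega_convex_iff_inside:
  "omega_convex \<Omega> K \<longleftrightarrow>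
     compact K \<and> K \<subseteq> \<Omega> \<and> (\<forall>x \<in> inside K. connected_component_set (- K) x \<inter> - \<Omega> \<noteq> {})"
  unfolding omega_convex_def hole_iff_inside by blast

lemma connected_component_Un_eq:
  assumes "x \<notin> S" "connected_component_set (- S) x \<inter> T = {}"
  shows "connected_component_set (- (S \<union> T)) x = connected_component_set (- S) x"
proof
  show "connected_component_set (- (S \<union> T)) x \<subseteq> connected_component_set (- S) x"
    by (simp add: connected_component_mono)
  show "connected_component_set (- S) x \<subseteq> connected_component_set (- (S \<union> T)) x"
    using assms connected_component_subset[of "- S" x]
    by (intro connected_component_maximal) auto
qed

lemma connected_component_Un_outside:
  fixes K K' :: "complex set"
  assumes "compact K" "compact K'" "K \<subseteq> outside K'"
    and "connected_component (- K) x y" "x \<in> outside K'" "y \<in> outside K'"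
  shows "connected_component (- (K \<union> K')) x y"
proof -
  have "connected_component (- (K \<union> - outside K')) x y"
  proof (rule Janiszewski)
    show "closed (- outside K')"
      by (intro closed_Compl open_outside compact_imp_closed assms(2))
    have "K \<inter> - outside K' = {}"
      using assms(3) by blast
    then show "connected (K \<inter> - outside K')" by simp
    show "connected_component (- (- outside K')) x y"
      using assms(2,5,6) connected_outside[of K'] compact_imp_bounded
      by (auto simp: connected_component_def)
  qed (use assms in auto)
  then show ?thesis
    by (rule connected_component_of_subset) (use outside_no_overlap in blast)
qed

lemma outside_Int_outside_subset_outside_Un:
  fixes K K' :: "complex set"
  assumes "compact K" "compact K'" "K \<subseteq> outside K'"
  shows "outside K \<inter> outside K' \<subseteq> outside (K \<union> K')"
proof -
  have "bounded (- (outside K \<inter> outside K' \<inter> outside (K \<union> K')))"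
    using assms by (simp add: cobounded_outside compact_imp_bounded)
  from cobounded_imp_unbounded[OF this]
  have "outside K \<inter> outside K' \<inter> outside (K \<union> K') \<noteq> {}"
    by auto
  then obtain y where y: "y \<in> outside K" "y \<in> outside K'" "y \<in> outside (K \<union> K')"
    by blast
  show ?thesis
  proof
    fix x assume x: "x \<in> outside K \<inter> outside K'"
    have "connected_component (- K) x y"
      using x y connected_outside[of K] assms(1) compact_imp_bounded
      by (auto simp: connected_component_def outside_def)
    then have "connected_component (- (K \<union> K')) y x"
      using connected_component_Un_outside assms x y connected_component_sym by blast
    then show "x \<in> outside (K \<union> K')"
      using y(3) outside_same_component by blast
  qed
qed

lemma omega_convex_component_Un_meets:
  assumes "omega_convex \<Omega> K" "x \<in> inside K" "connected_component_set (- K) x \<inter> K' = {}"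
  shows "connected_component_set (- (K \<union> K')) x \<inter> - \<Omega> \<noteq> {}"
proof -
  have "x \<notin> K"
    using assms(2) inside_no_overlap by blast
  then show ?thesis
    using assms connected_component_Un_eq[of x K K'] by (simp add: omega_convex_iff_inside)
qed

lemma omega_convex_Un_separated:
  fixes \<Omega> K K' :: "complex set"
  assumes cK: "omega_convex \<Omega> K" and cK': "omega_convex \<Omega> K'"
    and KK': "K \<subseteq> outside K'" and K'K: "K' \<subseteq> outside K"
  shows "omega_convex \<Omega> (K \<union> K')"
  unfolding omega_convex_iff_inside
proof (intro conjI ballI)
  have compact: "compact K" "compact K'"
    using cK cK' by (auto simp: omega_convex_def)
  then show "compact (K \<union> K')" by blast
  show "K \<union> K' \<subseteq> \<Omega>"
    using cK cK' by (simp add: omega_convex_def)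
  fix x assume x: "x \<in> inside (K \<union> K')"
  then have "x \<notin> K \<union> K'" "x \<notin> outside (K \<union> K')"
    using inside_no_overlap inside_Int_outside by blast+
  then consider "x \<in> inside K" | "x \<in> inside K'" | "x \<in> outside K" "x \<in> outside K'"
    using inside_Un_outside by blast
  then show "connected_component_set (- (K \<union> K')) x \<inter> - \<Omega> \<noteq> {}"
  proof cases
    case 1
    then have "connected_component_set (- K) x \<inter> K' = {}"
      using K'K inside_same_component inside_Int_outside by blast
    then show ?thesis
      using omega_convex_component_Un_meets[OF cK 1] by blast
  next
    case 2
    then have "connected_component_set (- K') x \<inter> K = {}"
      using KK' inside_same_component inside_Int_outside by blast
    then show ?thesis
      using omega_convex_component_Un_meets[OF cK' 2] by (simp add: Un_commute)
  next
    case 3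
    then show ?thesis
      using outside_Int_outside_subset_outside_Un[OF compact KK'] \<open>x \<notin> outside (K \<union> K')\<close>
      by blast
  qed
qed

lemma subset_outside_if_subset_inside:
  fixes K K' :: "'a::{real_normed_vector, perfect_space} set"
  assumes "closed K" "connected K" "K' \<subseteq> inside K"
  shows "K \<subseteq> outside K'"
proof
  fix x assume x: "x \<in> K"
  have "K \<union> outside K \<subseteq> - K'"
    using assms(3) inside_Int_outside inside_no_overlap by blast
  then have "K \<union> outside K \<subseteq> connected_component_set (- K') x"
    using x connected_with_outside[OF assms(1,2)] by (intro connected_component_maximal) auto
  moreover have "\<not> bounded (K \<union> outside K)"
    by (metis bounded_Un unbounded_outside)
  ultimately show "x \<in> outside K'"
    by (metis bounded_subset mem_Collect_eq outside)
qed

lemma omega_convex_Un_imp_hole_of_Omega: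
  fixes \<Omega> K K' :: "complex set"
  assumes cKK': "omega_convex \<Omega> (K \<union> K')" and "compact K" "compact K'"
    and V: "hole K V" and K'V: "K' \<subseteq> V" and "K' \<noteq> {}"
  shows "\<exists>H. hole \<Omega> H \<and> H \<subseteq> V - phull K'"
proof -
  obtain p where V_eq: "V = connected_component_set (- K) p"
    using V by (auto simp: hole_iff_inside)
  have "open V"
    unfolding V_eq using assms(2) by (simp add: compact_imp_closed open_Compl open_connected_component)
  then obtain q where q: "q \<in> V" "q \<in> outside K'"
    using outside_compact_in_open[OF assms(3) _ K'V] assms(6) K'V by blast
  have V_q: "connected_component_set (- K) q = V"
    using q(1) V_eq connected_component_eq by blast
  define W where "W = connected_component_set (- (K \<union> K')) q"
  have WV: "W \<subseteq> V"
    unfolding W_def V_q[symmetric] by (intro connected_component_mono) blast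
  have W_out: "W \<subseteq> outside K'"
  proof
    fix y assume "y \<in> W"
    then have "connected_component (- (K \<union> K')) q y"
      by (simp add: W_def)
    then have "connected_component (- K') q y"
      by (rule connected_component_of_subset) auto
    then show "y \<in> outside K'"
      using q(2) outside_same_component by blast
  qed
  have "bounded V"
    using V by (simp add: hole_def)
  moreover have "q \<notin> K \<union> K'"
    using q hole_subset_inside[OF V] inside_no_overlap outside_no_overlap by blast
  ultimately have "q \<in> inside (K \<union> K')"
    using WV bounded_subset by (auto simp: inside_def W_def)
  then have "W \<inter> - \<Omega> \<noteq> {}"
    using cKK' unfolding omega_convex_iff_inside W_def by blast
  then obtain r where r: "r \<in> W" "r \<notin> \<Omega>"
    by blast
  have K_\<Omega>: "K \<subseteq> \<Omega>" "K' \<subseteq> \<Omega>"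
    using cKK' by (auto simp: omega_convex_def)
  define H where "H = connected_component_set (- \<Omega>) r"
  have "H \<subseteq> connected_component_set (- K) r"
    unfolding H_def using K_\<Omega> by (intro connected_component_mono) auto
  also have "\<dots> = V"
    using r(1) WV V_eq connected_component_eq by blast
  finally have HV: "H \<subseteq> V" .
  have "H \<subseteq> connected_component_set (- K') r"
    unfolding H_def using K_\<Omega> by (intro connected_component_mono) auto
  also have "\<dots> \<subseteq> outside K'"
    using r(1) W_out outside_same_component by blast
  finally have "H \<subseteq> outside K'" .
  moreover have "H \<in> components (- \<Omega>)"
    unfolding H_def using r(2) by (simp add: componentsI)
  then have "hole \<Omega> H"
    using HV \<open>bounded V\<close> bounded_subset by (auto simp: hole_def)
  ultimately show ?thesis
    using HV Compl_phull[of K'] by blast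
qed

lemma omega_convex_Un_if_hole_of_Omega:
  fixes \<Omega> K K' :: "complex set"
  assumes cK: "omega_convex \<Omega> K" and cK': "omega_convex \<Omega> K'" and "connected K"
    and V: "hole K V" and K'V: "K' \<subseteq> V" and H: "hole \<Omega> H" "H \<subseteq> V - phull K'"
  shows "omega_convex \<Omega> (K \<union> K')"
  unfolding omega_convex_iff_inside
proof (intro conjI ballI)
  have compact: "compact K" "compact K'"
    using cK cK' by (auto simp: omega_convex_def)
  then show "compact (K \<union> K')" by blast
  show "K \<union> K' \<subseteq> \<Omega>"
    using cK cK' by (simp add: omega_convex_def)
  have KK': "K \<subseteq> outside K'"
    using subset_outside_if_subset_inside[OF compact_imp_closed[OF compact(1)] assms(3)]
      hole_subset_inside[OF V] K'V by blast
  obtain h where "h \<in> H"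
    using H(1) in_components_nonempty unfolding hole_def by blast
  then have h: "h \<in> V" "h \<in> outside K'" "h \<notin> \<Omega>"
    using H in_components_subset Compl_phull[of K'] unfolding hole_def by blast+
  obtain p where V_eq: "V = connected_component_set (- K) p"
    using V by (auto simp: hole_iff_inside)
  fix x assume x: "x \<in> inside (K \<union> K')"
  then have x_notin: "x \<notin> K \<union> K'"
    using inside_no_overlap by blast
  then consider "x \<notin> V" | "x \<in> inside K'" | "x \<in> V" "x \<in> outside K'"
    using inside_Un_outside by blast
  then show "connected_component_set (- (K \<union> K')) x \<inter> - \<Omega> \<noteq> {}"
  proof cases
    case 1
    then have "connected_component_set (- K) x \<inter> V = {}"
      unfolding V_eq by (simp add: connected_component_disjoint)
    then have disj: "connected_component_set (- K) x \<inter> K' = {}"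
      using K'V by blast
    then have "x \<in> inside K"
      using x x_notin connected_component_Un_eq[of x K K'] by (simp add: inside_def)
    then show ?thesis
      using omega_convex_component_Un_meets[OF cK _ disj] by blast
  next
    case 2
    then have "connected_component_set (- K') x \<inter> K = {}"
      using KK' inside_same_component inside_Int_outside by blast
    then show ?thesis
      using omega_convex_component_Un_meets[OF cK' 2] by (simp add: Un_commute)
  next
    case 3
    have "connected_component (- K) x h"
      using 3(1) h(1) V_eq connected_component_eq by blast
    then have "connected_component (- (K \<union> K')) x h"
      using connected_component_Un_outside[OF compact KK'] 3(2) h(2) by blast
    then show ?thesis
      using h(3) by blast
  qed
qed

lemma omega_convex_Un_iff_of_not_subset_outside:
  fixes \<Omega> K K' :: "complex set"
  assumes cK: "omega_convex \<Omega> K" and cK': "omega_convex \<Omega> K'"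
    and "connected K" "connected K'" "K \<inter> K' = {}" and "\<not> K' \<subseteq> outside K"
  shows "omega_convex \<Omega> (K \<union> K') \<longleftrightarrow>
    ((K \<subseteq> - phull K' \<and> K' \<subseteq> - phull K)
     \<or> (\<exists>U. hole K U \<and> K' \<subseteq> U \<and> (\<exists>H. hole \<Omega> H \<and> H \<subseteq> U - phull K'))
     \<or> (\<exists>U'. hole K' U' \<and> K \<subseteq> U' \<and> (\<exists>H. hole \<Omega> H \<and> H \<subseteq> U' - phull K)))"
proof -
  have compact: "compact K" "compact K'"
    using cK cK' by (auto simp: omega_convex_def)
  obtain x where x: "x \<in> K'" "x \<notin> outside K"
    using assms(6) by blast
  then have x_in: "x \<in> inside K"
    using assms(5) inside_Un_outside by blast
  define V where "V = connected_component_set (- K) x"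
  have V: "hole K V"
    unfolding V_def hole_iff_inside using x_in by blast
  have K'V: "K' \<subseteq> V"
    unfolding V_def using assms(4,5) x by (intro connected_component_maximal) auto
  have KK': "K \<subseteq> outside K'"
    using subset_outside_if_subset_inside[OF compact_imp_closed[OF compact(1)] assms(3)]
      hole_subset_inside[OF V] K'V by blast
  have "K \<noteq> {}"
    using x_in by auto
  then have no_hole_of_K': "\<not> K \<subseteq> U'" if "hole K' U'" for U'
    using that KK' hole_subset_inside inside_Int_outside by blast
  have "\<not> K' \<subseteq> - phull K"
    using x x_in Compl_phull[of K] by blast
  moreover have V_unique: "U = V" if U: "hole K U" "K' \<subseteq> U" for U
  proof -
    obtain y where "U = connected_component_set (- K) y"
      using U(1) unfolding hole_iff_inside by blast
    then show ?thesis
      using U(2) x(1) V_def connected_component_eq by blast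
  qed
  moreover have "omega_convex \<Omega> (K \<union> K') \<longleftrightarrow> (\<exists>H. hole \<Omega> H \<and> H \<subseteq> V - phull K')"
  proof
    assume "omega_convex \<Omega> (K \<union> K')"
    then show "\<exists>H. hole \<Omega> H \<and> H \<subseteq> V - phull K'"
      using omega_convex_Un_imp_hole_of_Omega[OF _ compact V K'V] x(1) by blast
  next
    assume "\<exists>H. hole \<Omega> H \<and> H \<subseteq> V - phull K'"
    then obtain H where "hole \<Omega> H" "H \<subseteq> V - phull K'"
      by blast
    then show "omega_convex \<Omega> (K \<union> K')"
      by (rule omega_convex_Un_if_hole_of_Omega[OF cK cK' assms(3) V K'V])
  qed
  ultimately show ?thesis
    using V K'V no_hole_of_K' by metis
qed

theorem mainTheorem2:
  fixes \<Omega> L L' :: "complex set"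
  assumes "open \<Omega>" and "connected \<Omega>" and "\<Omega> \<noteq> {}"
    and "compact L" and "compact L'" and "L \<subseteq> \<Omega>" and "L' \<subseteq> \<Omega>"
    and "connected L" and "connected L'" and "L \<inter> L' = {}"
    and "omega_convex \<Omega> L" and "omega_convex \<Omega> L'"
  shows "omega_convex \<Omega> (L \<union> L') \<longleftrightarrow>
    ((L \<subseteq> - phull L' \<and> L' \<subseteq> - phull L)
     \<or> (\<exists>U. hole L U \<and> L' \<subseteq> U \<and> (\<exists>H. hole \<Omega> H \<and> H \<subseteq> U - phull L'))
     \<or> (\<exists>U'. hole L' U' \<and> L \<subseteq> U' \<and> (\<exists>H. hole \<Omega> H \<and> H \<subseteq> U' - phull L)))"
proof (cases "L' \<subseteq> outside L \<and> L \<subseteq> outside L'")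
  case True
  then show ?thesis
    using omega_convex_Un_separated[OF assms(11,12)] Compl_phull by blast
next
  case False
  then consider "\<not> L' \<subseteq> outside L" | "\<not> L \<subseteq> outside L'" by blast
  then show ?thesis
  proof cases
    case 1
    then show ?thesis
      using omega_convex_Un_iff_of_not_subset_outside[OF assms(11,12,8,9,10)] by blast
  next
    case 2
    have "L' \<inter> L = {}"
      using assms(10) by blast
    from omega_convex_Un_iff_of_not_subset_outside[OF assms(12,11,9,8) this 2]
    show ?thesis
      by (simp add: Un_commute) blast
  qed
qed

end
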